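(* Let $L_1,L_2\in(0,\infty]$, not both equal to $\infty$, and $\mu_1,\mu_2\in\mathbb{R}$ with $\mu_1<L_1$, $\mu_2<L_2$, and assume $\mu_1+\mu_2>0$ or $\mu_1=\mu_2=0$. Let $f_1\in\mathcal{F}_{\mu_1,L_1}$, $f_2\in\mathcal{F}_{\mu_2,L_2}$, with $F=f_1-f_2$ bounded below. Let $x\in\mathbb{R}^d$, let $x^+$ be obtained by one DCA iteration from $x$ with selected subgradient $g_2\in\partial f_2(x)$, let $g_1^+:=g_2\in\partial f_1(x^+)$, and let $g_1\in\partial f_1(x)$ and $g_2^+\in\partial f_2(x^+)$ be arbitrary. Write $S_1:=\mu_1^{-1}+\mu_2^{-1}+L_2^{-1}$ and $S_2:=\mu_1^{-1}+\mu_2^{-1}+L_1^{-1}$. For each $i\in\{1,\dots,8\}$, if $(L_1,L_2,\mu_1,\mu_2)$ lies in the domain $D_i$ below, then $$F(x)-F(x^+)\ \ge\ \frac{\sigma_i}{2}\|g_1-g_2\|^2+\frac{\sigma_i^+}{2}\|g_1^+-g_2^+\|^2,$$ with $\sigma_i,\sigma_i^+\ge 0$ given by: (1) $D_1$: $L_1\ge L_2>\mu_1\ge 0$ and either $\mu_2\ge 0$, or [$\mu_1>-\mu_2>0$ and $S_1\le L_1^{-1}(2+L_2/\mu_2)$]; $\sigma_1=\frac{L_2-\mu_1}{L_2(L_1-\mu_1)}$, $\sigma_1^+=\frac{1}{L_2}\Big(1+\frac{\mu_1(L_1-L_2)}{L_2(L_1-\mu_1)}\Big)$. (2) $D_2$: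 $L_2\ge L_1>\mu_2\ge 0$ and either $\mu_1\ge 0$, or [$\mu_2>-\mu_1>0$ and $S_2\le L_2^{-1}(2+L_1/\mu_1)$]; $\sigma_2=\frac{1}{L_1}\Big(1+\frac{\mu_2(L_2-L_1)}{L_1(L_2-\mu_2)}\Big)$, $\sigma_2^+=\frac{L_1-\mu_2}{L_1(L_2-\mu_2)}$. (3) $D_3$: $\mu_1>-\mu_2>0$, $L_2>\mu_1$, $L_1>\mu_2$, and $L_1^{-1}(2+L_2/\mu_2)\le S_1\le 0$; $\sigma_3=\frac{L_1^{-1}S_1}{S_1-L_1^{-1}}$, $\sigma_3^+=\frac{1}{L_2+\mu_2}$. (4) $D_4$: $\mu_2>-\mu_1>0$, $L_2>\mu_1$, $L_1>\mu_2$, and $L_2^{-1}(2+L_1/\mu_1)\le S_2\le 0$; $\sigma_4=\frac{1}{L_1+\mu_1}$, $\sigma_4^+=\frac{L_2^{-1}S_2}{S_2-L_2^{-1}}$. (5) $D_5$: $\mu_1>-\mu_2>0$, $L_1>\mu_2$, and $\max\{L_1^{-1}(2+L_2/\mu_2),0\}<S_1$; $\sigma_5=0$, $\sigma_5^+=\frac{\mu_1+\mu_2}{\mu_2^2}$. (6) $D_6$: $\mu_2>-\mu_1>0$, $L_2>\mu_1$, and $\max\{L_2^{-1}(2+L_1/\mu_1),0\}<S_2$; $\sigma_6=\frac{\mu_1+\mu_2}{\mu_1^2}$, $\sigma_6^+=0$. (7) $D_7$: $L_1>\mu_1>L_2>0$ and either $\mu_2\ge 0$ or [$\mu_2<0$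 and $S_1\le 0$]; $\sigma_7=0$, $\sigma_7^+=\frac{L_2+\mu_1}{L_2^2}$. (8) $D_8$: $L_2>\mu_2>L_1>0$ and either $\mu_1\ge 0$ or [$\mu_1<0$ and $S_2\le 0$]; $\sigma_8=\frac{L_1+\mu_2}{L_1^2}$, $\sigma_8^+=0$. Whenever $L_1$ or $L_2$ equals $\infty$, all expressions above are interpreted as their limits as that parameter tends to $+\infty$ (in particular $1/\infty=0$).
   Context: For $L\in(0,\infty]$ and $\mu<L$, $\mathcal{F}_{\mu,L}=\mathcal{F}_{\mu,L}(\mathbb{R}^d)$ denotes the class of proper lower semicontinuous functions $f:\mathbb{R}^d\to\mathbb{R}$ such that $f-\frac{\mu}{2}\|\cdot\|^2$ is convex and, if $L<\infty$, also $\frac{L}{2}\|\cdot\|^2-f$ is convex (for $L=\infty$ only the first condition is imposed). A function in $\mathcal{F}_{\mu,L}$ with $L<\infty$ is called smooth. Subdifferential: for convex $f$, $\partial f(x)=\{g:\ f(y)\ge f(x)+\langle g,y-x\rangle\ \forall y\}$; for $f\in\mathcal{F}_{\mu,L}$ with $\mu<0$, $\partial f(x):=\{g-\mu x:\ g\in\partial\tilde f(x)\}$ where $\tilde f=f-\frac{\mu}{2}\|\cdot\|^2$ is convex; if $f$ is differentiable at $x$ then $\partial f(x)=\{\nabla f(x)\}$. One DCA iteration from $x$: select $g_2\in\partial f_2(x)$, then select $x^+\in\arg\min_{w\in\mathbb{R}^d}\{f_1(w)-\langle g_2,w\rangle\}$ (assumed to exist); the optimality condition gives $g_2\in\partial f_1(x^+)$.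 *)

theory Defs
  imports "HOL-Analysis.Analysis" "HOL-Library.Extended_Real"
begin

definition lsc :: "('a::topological_space \<Rightarrow> real) \<Rightarrow> bool" where
  "lsc f \<longleftrightarrow> (\<forall>c. closed {x. f x \<le> c})"

definition Fclass :: "real \<Rightarrow> ereal \<Rightarrow> ('a::euclidean_space \<Rightarrow> real) \<Rightarrow> bool" where
  "Fclass \<mu> L f \<longleftrightarrow> lsc f \<and>
     convex_on UNIV (\<lambda>x. f x - \<mu> / 2 * (norm x)^2) \<and>
     (L \<noteq> \<infinity> \<longrightarrow> convex_on UNIV (\<lambda>x. real_of_ereal L / 2 * (norm x)^2 - f x))"

definition cvx_subdiff :: "('a::real_inner \<Rightarrow> real) \<Rightarrow> 'a \<Rightarrow> 'a set" where
  "cvx_subdiff f x = {g. \<forall>y. f y \<ge> f x + inner g (y - x)}"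

definition subdiff :: "real \<Rightarrow> ('a::real_inner \<Rightarrow> real) \<Rightarrow> 'a \<Rightarrow> 'a set" where
  "subdiff \<mu> f x =
     (if \<mu> < 0 then {g + \<mu> *\<^sub>R x | g. g \<in> cvx_subdiff (\<lambda>y. f y - \<mu> / 2 * (norm y)^2) x}
      else cvx_subdiff f x)"

definition lim_ext :: "(real \<Rightarrow> real \<Rightarrow> real) \<Rightarrow> ereal \<Rightarrow> ereal \<Rightarrow> real" where
  "lim_ext \<phi> L1 L2 =
     (if L1 = \<infinity> then Lim at_top (\<lambda>t. \<phi> t (real_of_ereal L2))
      else if L2 = \<infinity> then Lim at_top (\<lambda>t. \<phi> (real_of_ereal L1) t)
      else \<phi> (real_of_ereal L1) (real_of_ereal L2))"

end

theory Submission
  imports Defs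
begin

text \<open>
  Write hi = fi - \<mu>i/2 \<parallel>.\<parallel>^2, a convex function with (Li - \<mu>i)-Lipschitz gradient. It satisfies
  the interpolation inequality h y \<ge> h z + \<langle>u, y - z\<rangle> + \<kappa>/2 \<parallel>v - u\<parallel>^2 for subgradients u at z
  and v at y, where \<kappa> = 1/(Li - \<mu>i). The DCA step makes g2 a subgradient of f1 at x', and the
  interpolation inequalities of h1 from x' to x and of h2 in both directions, weighted 1, 1 + \<beta>
  and \<beta>, add up to F(x) - F(x') minus the claimed bound minus two quadratic forms in
  (x - x', g1 - g2) and (x - x', g2 - g2'). So the bound holds as soon as some \<beta> \<ge> 0 and some
  splitting of the coefficient of \<parallel>x - x'\<parallel>^2 make both 2x2 coefficient matrices positive
  semidefinite. On each domain these parameters are explicit rational functions of \<iota>i = 1/Li,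
  which remain valid at \<iota>i = 0 and so cover infinite Li. The domains D2, D4, D6, D8 are mirror
  images of D1, D3, D5, D7: exchanging (f1, x, g1) with (f2, x', g2') leaves F(x) - F(x') unchanged
  and swaps \<sigma> and \<sigma>'.
\<close>

section \<open>Convex functions with Lipschitz gradient\<close>

lemma nonneg_of_ge_neg_linear:
  fixes D K :: real
  assumes "\<And>t. 0 < t \<Longrightarrow> t \<le> 1 \<Longrightarrow> - (K * t) \<le> D"
  shows "0 \<le> D"
proof (rule tendsto_le[OF trivial_limit_at_right_real tendsto_const])
  show "((\<lambda>t. - (K * t)) \<longlongrightarrow> 0) (at_right 0)"
    by (auto intro!: tendsto_eq_intros)
  show "\<forall>\<^sub>F t in at_right 0. - (K * t) \<le> D"
    unfolding eventually_at_right_field using assms by (auto intro!: exI[of _ 1])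
qed

lemma convex_on_subgradient_of_quadratic_minorant:
  fixes k :: "'a::real_inner \<Rightarrow> real"
  assumes cvx: "convex_on UNIV k"
    and minor: "\<And>w. k y + inner a (w - y) - c/2 * (norm (w - y))^2 \<le> k w"
  shows "k y + inner a (z - y) \<le> k z"
proof -
  have "0 \<le> k z - k y - inner a (z - y)"
  proof (rule nonneg_of_ge_neg_linear)
    fix t :: real assume t: "0 < t" "t \<le> 1"
    have "k (y + t *\<^sub>R (z - y)) \<le> (1 - t) * k y + t * k z"
      using convex_onD[OF cvx, of t y z] t by (simp add: algebra_simps)
    moreover have "k y + t * inner a (z - y) - c/2 * t^2 * (norm (z - y))^2 \<le> k (y + t *\<^sub>R (z - y))"
      using minor[of "y + t *\<^sub>R (z - y)"] t by (simp add: power_mult_distrib)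
    ultimately have "t * (- (c/2 * (norm (z - y))^2 * t)) \<le> t * (k z - k y - inner a (z - y))"
      by (simp add: algebra_simps power2_eq_square)
    thus "- (c/2 * (norm (z - y))^2 * t) \<le> k z - k y - inner a (z - y)"
      using mult_le_cancel_left_pos[OF \<open>0 < t\<close>] by blast
  qed
  thus ?thesis by simp
qed

text \<open>Convexity at the midpoint y of w and 2y - w turns the majorant into a quadratic minorant.\<close>

lemma convex_on_subgradient_of_quadratic_majorant:
  fixes k :: "'a::real_inner \<Rightarrow> real"
  assumes cvx: "convex_on UNIV k"
    and major: "\<And>w. k w \<le> k y + inner a (w - y) + c/2 * (norm (w - y))^2"
  shows "k y + inner a (z - y) \<le> k z"
proof (rule convex_on_subgradient_of_quadratic_minorant[OF cvx])
  fix w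
  have "k y \<le> (1 - 1/2) * k (2 *\<^sub>R y - w) + 1/2 * k w"
    using convex_onD[OF cvx, of "1/2" "2 *\<^sub>R y - w" w] by (simp add: algebra_simps)
  moreover have "k (2 *\<^sub>R y - w) \<le> k y + inner a (y - w) + c/2 * (norm (w - y))^2"
  proof -
    have "2 *\<^sub>R y - w - y = - (w - y)" by (simp add: scaleR_2 algebra_simps)
    thus ?thesis using major[of "2 *\<^sub>R y - w"] by (simp only: norm_minus_cancel) (simp add: inner_minus_right)
  qed
  ultimately show "k y + inner a (w - y) - c/2 * (norm (w - y))^2 \<le> k w"
    by (simp add: inner_diff_right)
qed

lemma smooth_descent_lemma:
  fixes h :: "'a::real_inner \<Rightarrow> real"
  assumes cvx: "convex_on UNIV (\<lambda>w. l/2 * (norm w)^2 - h w)"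
    and subgrad: "\<And>w. h y + inner v (w - y) \<le> h w"
  shows "h z \<le> h y + inner v (z - y) + l/2 * (norm (z - y))^2"
proof -
  have expand: "l/2 * (norm w)^2 = l/2 * (norm y)^2 + inner (l *\<^sub>R y) (w - y) + l/2 * (norm (w - y))^2" for w
    by (simp add: power2_norm_eq_inner inner_diff_left inner_diff_right inner_commute algebra_simps)
  have "l/2 * (norm y)^2 - h y + inner (l *\<^sub>R y - v) (z - y) \<le> l/2 * (norm z)^2 - h z"
  proof (rule convex_on_subgradient_of_quadratic_majorant[OF cvx])
    show "l/2 * (norm w)^2 - h w
          \<le> l/2 * (norm y)^2 - h y + inner (l *\<^sub>R y - v) (w - y) + l/2 * (norm (w - y))^2" for w
      using subgrad[of w] expand[of w] inner_diff_left[of "l *\<^sub>R y" v "w - y"] by linarith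
  qed
  thus ?thesis using expand[of z] inner_diff_left[of "l *\<^sub>R y" v "z - y"] by linarith
qed

lemma smooth_subgradient_cocoercive:
  fixes h :: "'a::real_inner \<Rightarrow> real"
  assumes cvx: "convex_on UNIV (\<lambda>w. l/2 * (norm w)^2 - h w)" and l: "0 < l"
    and u: "\<And>w. h x + inner u (w - x) \<le> h w"
    and v: "\<And>w. h y + inner v (w - y) \<le> h w"
  shows "h x + inner u (y - x) + 1/(2*l) * (norm (v - u))^2 \<le> h y"
proof -
  define z where "z = y - (1/l) *\<^sub>R (v - u)"
  have "h x + inner u (z - x) \<le> h y + inner v (z - y) + l/2 * (norm (z - y))^2"
    using u[of z] smooth_descent_lemma[OF cvx v, of z] by linarith
  moreover have "inner v (z - y) - inner u (z - x) = - inner u (y - x) - (1/l) * (norm (v - u))^2"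
    by (simp add: z_def inner_diff_left inner_diff_right power2_norm_eq_inner algebra_simps)
  moreover have "l/2 * (norm (z - y))^2 = 1/(2*l) * (norm (v - u))^2"
  proof -
    have "norm (z - y) = norm (v - u) / l" using l by (simp add: z_def)
    thus ?thesis using l by (simp add: power2_eq_square)
  qed
  ultimately show ?thesis by linarith
qed

section \<open>Shifted functions of the classes F_{mu,L}\<close>

definition shifted :: "real \<Rightarrow> ('a::real_inner \<Rightarrow> real) \<Rightarrow> 'a \<Rightarrow> real" where
  "shifted \<mu> f z = f z - \<mu>/2 * (norm z)^2"

text \<open>
  Smoothness constants enter through their reciprocals \<iota> = 1/L, so that L = \<infinity> becomes \<iota> = 0,
  and inv_gap \<mu> \<iota> = 1/(L - \<mu>) is the inverse Lipschitz constant of the shifted gradient.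
\<close>

definition recip :: "ereal \<Rightarrow> real" where
  "recip L = real_of_ereal (inverse L)"

definition inv_gap :: "real \<Rightarrow> real \<Rightarrow> real" where
  "inv_gap \<mu> \<iota> = \<iota> / (1 - \<mu> * \<iota>)"

lemma recip_ereal [simp]: "recip (ereal l) = 1 / l"
  by (simp add: recip_def inverse_eq_divide)

lemma recip_infinity [simp]: "recip \<infinity> = 0"
  by (simp add: recip_def)

lemma Fclass_shifted_convex: "Fclass \<mu> L f \<Longrightarrow> convex_on UNIV (shifted \<mu> f)"
  unfolding Fclass_def shifted_def by simp

lemma Fclass_shifted_smooth:
  assumes "Fclass \<mu> (ereal l) f"
  shows "convex_on UNIV (\<lambda>z. (l - \<mu>)/2 * (norm z)^2 - shifted \<mu> f z)"
proof -
  have "(\<lambda>z. (l - \<mu>)/2 * (norm z)^2 - shifted \<mu> f z) = (\<lambda>z. l/2 * (norm z)^2 - f z)"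
    by (auto simp: shifted_def algebra_simps diff_divide_distrib)
  thus ?thesis using assms by (simp add: Fclass_def)
qed

lemma Fclass_shifted_subgradient:
  fixes f :: "'a::euclidean_space \<Rightarrow> real"
  assumes F: "Fclass \<mu> L f" and g: "\<And>w. f y + inner g (w - y) \<le> f w"
  shows "shifted \<mu> f y + inner (g - \<mu> *\<^sub>R y) (w - y) \<le> shifted \<mu> f w"
proof -
  have minor: "shifted \<mu> f y + inner (g - \<mu> *\<^sub>R y) (w - y) - \<mu>/2 * (norm (w - y))^2 \<le> shifted \<mu> f w" for w
  proof -
    have "shifted \<mu> f w - shifted \<mu> f y - inner (g - \<mu> *\<^sub>R y) (w - y)
        = f w - f y - inner g (w - y) - \<mu>/2 * (norm (w - y))^2"
      by (simp add: shifted_def power2_norm_eq_inner inner_diff_left inner_diff_right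
          inner_commute algebra_simps)
    thus ?thesis using g[of w] by linarith
  qed
  show ?thesis
  proof (cases "0 \<le> \<mu>")
    case True
    show ?thesis by (rule convex_on_subgradient_of_quadratic_minorant[OF Fclass_shifted_convex[OF F] minor])
  next
    case False
    hence "0 \<le> - \<mu>/2 * (norm (w - y))^2" by (simp add: mult_nonpos_nonneg)
    thus ?thesis using minor[of w] by linarith
  qed
qed

lemma Fclass_shifted_subgradient_of_subdiff:
  fixes f :: "'a::euclidean_space \<Rightarrow> real"
  assumes F: "Fclass \<mu> L f" and g: "g \<in> subdiff \<mu> f y"
  shows "shifted \<mu> f y + inner (g - \<mu> *\<^sub>R y) (w - y) \<le> shifted \<mu> f w"
proof (cases "\<mu> < 0")
  case True
  then obtain g' where "g = g' + \<mu> *\<^sub>R y" "g' \<in> cvx_subdiff (shifted \<mu> f) y"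
    using g by (auto simp: subdiff_def shifted_def[abs_def])
  thus ?thesis by (simp add: cvx_subdiff_def)
next
  case False
  hence "\<And>w. f y + inner g (w - y) \<le> f w"
    using g by (simp add: subdiff_def cvx_subdiff_def)
  thus ?thesis by (rule Fclass_shifted_subgradient[OF F])
qed

lemma Fclass_interpolation:
  fixes f :: "'a::euclidean_space \<Rightarrow> real"
  assumes F: "Fclass \<mu> L f" and \<mu>L: "ereal \<mu> < L" and L: "0 < L"
    and u1: "\<And>w. shifted \<mu> f y1 + inner u1 (w - y1) \<le> shifted \<mu> f w"
    and u2: "\<And>w. shifted \<mu> f y2 + inner u2 (w - y2) \<le> shifted \<mu> f w"
  shows "shifted \<mu> f y2 + inner u2 (y1 - y2) + inv_gap \<mu> (recip L)/2 * (norm (u1 - u2))^2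
         \<le> shifted \<mu> f y1"
proof (cases L)
  case (real l)
  with \<mu>L L have "0 < l - \<mu>" "0 < l" by auto
  moreover from this have "inv_gap \<mu> (recip L) = 1 / (l - \<mu>)"
    by (simp add: real inv_gap_def field_simps)
  ultimately show ?thesis
    using smooth_subgradient_cocoercive[OF Fclass_shifted_smooth[OF F[unfolded real]] _ u2 u1]
    by (simp add: mult.commute)
next
  case PInf
  thus ?thesis using u2[of y1] by (simp add: inv_gap_def)
qed (use L in simp)

section \<open>Certificates for one DCA step\<close>

definition psd2 :: "real \<Rightarrow> real \<Rightarrow> real \<Rightarrow> bool" where
  "psd2 c r p \<longleftrightarrow> 0 \<le> c \<and> 0 \<le> p \<and> r^2 \<le> c * p"

lemma psd2_quadratic_form_nonneg:
  fixes a d :: "'a::real_inner"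
  assumes "psd2 c r p"
  shows "0 \<le> c * (norm d)^2 + 2 * r * inner a d + p * (norm a)^2"
proof (cases "c = 0")
  case True
  with assms show ?thesis by (simp add: psd2_def)
next
  case False
  with assms have c: "0 < c" by (simp add: psd2_def)
  have "c * (c * (norm d)^2 + 2 * r * inner a d + p * (norm a)^2)
        = (norm (c *\<^sub>R d + r *\<^sub>R a))^2 + (c * p - r^2) * (norm a)^2"
    unfolding power2_norm_eq_inner
    by (simp add: inner_add_left inner_add_right inner_commute algebra_simps power2_eq_square)
  also have "0 \<le> \<dots>" using assms by (simp add: psd2_def)
  finally show ?thesis using c by (simp add: zero_le_mult_iff)
qed

text \<open>
  \<beta> is the extra weight on the two interpolation inequalities of f2, and e moves part of the
  coefficient of \<parallel>x - x'\<parallel>^2 from the first quadratic form to the second.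
\<close>

definition dca_certificate :: "real \<Rightarrow> real \<Rightarrow> real \<Rightarrow> real \<Rightarrow> real \<Rightarrow> real \<Rightarrow> bool" where
  "dca_certificate \<mu>1 \<kappa>1 \<mu>2 \<kappa>2 \<sigma> \<sigma>p \<longleftrightarrow> (\<exists>\<beta> e. 0 \<le> \<beta> \<and>
     psd2 (\<mu>1 * (1 + \<kappa>1 * \<mu>1) - e) (\<kappa>1 * \<mu>1) (\<kappa>1 - \<sigma>) \<and>
     psd2 (e + (1 + 2*\<beta>) * \<mu>2 * (1 + \<kappa>2 * \<mu>2)) (\<beta> + (1 + 2*\<beta>) * \<kappa>2 * \<mu>2)
          ((1 + 2*\<beta>) * \<kappa>2 - \<sigma>p))"

lemma dca_descent_of_interpolation:
  fixes x xp g1 g2 g2p :: "'a::real_inner" and f1 f2 :: "'a \<Rightarrow> real"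
  assumes I1: "shifted \<mu>1 f1 xp + inner (g2 - \<mu>1 *\<^sub>R xp) (x - xp)
               + \<kappa>1/2 * (norm ((g1 - \<mu>1 *\<^sub>R x) - (g2 - \<mu>1 *\<^sub>R xp)))^2 \<le> shifted \<mu>1 f1 x"
    and I2: "shifted \<mu>2 f2 x + inner (g2 - \<mu>2 *\<^sub>R x) (xp - x)
               + \<kappa>2/2 * (norm ((g2p - \<mu>2 *\<^sub>R xp) - (g2 - \<mu>2 *\<^sub>R x)))^2 \<le> shifted \<mu>2 f2 xp"
    and I2': "shifted \<mu>2 f2 xp + inner (g2p - \<mu>2 *\<^sub>R xp) (x - xp)
               + \<kappa>2/2 * (norm ((g2 - \<mu>2 *\<^sub>R x) - (g2p - \<mu>2 *\<^sub>R xp)))^2 \<le> shifted \<mu>2 f2 x"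
    and cert: "dca_certificate \<mu>1 \<kappa>1 \<mu>2 \<kappa>2 \<sigma> \<sigma>p"
  shows "\<sigma>/2 * (norm (g1 - g2))^2 + \<sigma>p/2 * (norm (g2 - g2p))^2 \<le> f1 x - f2 x - (f1 xp - f2 xp)"
proof -
  obtain \<beta> e where \<beta>: "0 \<le> \<beta>"
    and B1: "psd2 (\<mu>1 * (1 + \<kappa>1 * \<mu>1) - e) (\<kappa>1 * \<mu>1) (\<kappa>1 - \<sigma>)"
    and B2: "psd2 (e + (1 + 2*\<beta>) * \<mu>2 * (1 + \<kappa>2 * \<mu>2)) (\<beta> + (1 + 2*\<beta>) * \<kappa>2 * \<mu>2)
          ((1 + 2*\<beta>) * \<kappa>2 - \<sigma>p)"
    using cert by (auto simp: dca_certificate_def)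
  define d a b where "d = x - xp" and "a = g1 - g2" and "b = g2 - g2p"
  define s1 where "s1 = shifted \<mu>1 f1 x - (shifted \<mu>1 f1 xp + inner (g2 - \<mu>1 *\<^sub>R xp) (x - xp)
               + \<kappa>1/2 * (norm ((g1 - \<mu>1 *\<^sub>R x) - (g2 - \<mu>1 *\<^sub>R xp)))^2)"
  define s2 where "s2 = shifted \<mu>2 f2 xp - (shifted \<mu>2 f2 x + inner (g2 - \<mu>2 *\<^sub>R x) (xp - x)
               + \<kappa>2/2 * (norm ((g2p - \<mu>2 *\<^sub>R xp) - (g2 - \<mu>2 *\<^sub>R x)))^2)"
  define s2' where "s2' = shifted \<mu>2 f2 x - (shifted \<mu>2 f2 xp + inner (g2p - \<mu>2 *\<^sub>R xp) (x - xp)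
               + \<kappa>2/2 * (norm ((g2 - \<mu>2 *\<^sub>R x) - (g2p - \<mu>2 *\<^sub>R xp)))^2)"
  define Q1 where "Q1 = (\<mu>1 * (1 + \<kappa>1 * \<mu>1) - e) * (norm d)^2 + 2 * (\<kappa>1 * \<mu>1) * inner (- a) d
               + (\<kappa>1 - \<sigma>) * (norm (- a))^2"
  define Q2 where "Q2 = (e + (1 + 2*\<beta>) * \<mu>2 * (1 + \<kappa>2 * \<mu>2)) * (norm d)^2
               + 2 * (\<beta> + (1 + 2*\<beta>) * \<kappa>2 * \<mu>2) * inner (- b) d
               + ((1 + 2*\<beta>) * \<kappa>2 - \<sigma>p) * (norm (- b))^2"
  have x: "x = xp + d" and g1: "g1 = g2 + a" and g2p: "g2p = g2 - b"
    by (simp_all add: d_def a_def b_def)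
  have "2 * (f1 x - f2 x - (f1 xp - f2 xp) - (\<sigma>/2 * (norm (g1 - g2))^2 + \<sigma>p/2 * (norm (g2 - g2p))^2))
        = 2 * (s1 + (1 + \<beta>) * s2 + \<beta> * s2') + Q1 + Q2"
    unfolding s1_def s2_def s2'_def Q1_def Q2_def shifted_def x g1 g2p
    by (simp add: power2_norm_eq_inner inner_diff_left inner_diff_right inner_add_left
        inner_add_right inner_commute algebra_simps; simp add: field_simps)
  moreover have "0 \<le> s1" "0 \<le> s2" "0 \<le> s2'"
    using I1 I2 I2' by (simp_all add: s1_def s2_def s2'_def)
  moreover have "0 \<le> Q1" "0 \<le> Q2"
    unfolding Q1_def Q2_def by (rule psd2_quadratic_form_nonneg[OF B1] psd2_quadratic_form_nonneg[OF B2])+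
  ultimately show ?thesis using \<beta> by (smt (verit) mult_nonneg_nonneg)
qed

lemma dca_descent_of_certificate:
  fixes f1 f2 :: "'a::euclidean_space \<Rightarrow> real"
  assumes F1: "Fclass \<mu>1 L1 f1" "ereal \<mu>1 < L1" "0 < L1"
    and F2: "Fclass \<mu>2 L2 f2" "ereal \<mu>2 < L2" "0 < L2"
    and g1: "\<And>w. shifted \<mu>1 f1 x + inner (g1 - \<mu>1 *\<^sub>R x) (w - x) \<le> shifted \<mu>1 f1 w"
    and g2: "\<And>w. shifted \<mu>1 f1 xp + inner (g2 - \<mu>1 *\<^sub>R xp) (w - xp) \<le> shifted \<mu>1 f1 w"
    and g2': "\<And>w. shifted \<mu>2 f2 x + inner (g2 - \<mu>2 *\<^sub>R x) (w - x) \<le> shifted \<mu>2 f2 w"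
    and g2p: "\<And>w. shifted \<mu>2 f2 xp + inner (g2p - \<mu>2 *\<^sub>R xp) (w - xp) \<le> shifted \<mu>2 f2 w"
    and cert: "dca_certificate \<mu>1 (inv_gap \<mu>1 (recip L1)) \<mu>2 (inv_gap \<mu>2 (recip L2)) \<sigma> \<sigma>p"
  shows "\<sigma>/2 * (norm (g1 - g2))^2 + \<sigma>p/2 * (norm (g2 - g2p))^2 \<le> f1 x - f2 x - (f1 xp - f2 xp)"
  using Fclass_interpolation[OF F1 g1 g2] Fclass_interpolation[OF F2 g2p g2']
    Fclass_interpolation[OF F2 g2' g2p] cert
  by (rule dca_descent_of_interpolation)

lemma dca_descent:
  fixes f1 f2 :: "'a::euclidean_space \<Rightarrow> real"
  assumes F1: "Fclass \<mu>1 L1 f1" "ereal \<mu>1 < L1" "0 < L1"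
    and F2: "Fclass \<mu>2 L2 f2" "ereal \<mu>2 < L2" "0 < L2"
    and g2: "g2 \<in> subdiff \<mu>2 f2 x" and xp: "\<forall>w. f1 xp - inner g2 xp \<le> f1 w - inner g2 w"
    and g1: "g1 \<in> subdiff \<mu>1 f1 x" and g2p: "g2p \<in> subdiff \<mu>2 f2 xp"
    and cert: "dca_certificate \<mu>1 (inv_gap \<mu>1 (recip L1)) \<mu>2 (inv_gap \<mu>2 (recip L2)) \<sigma> \<sigma>p
             \<or> dca_certificate \<mu>2 (inv_gap \<mu>2 (recip L2)) \<mu>1 (inv_gap \<mu>1 (recip L1)) \<sigma>p \<sigma>"
  shows "\<sigma>/2 * (norm (g1 - g2))^2 + \<sigma>p/2 * (norm (g2 - g2p))^2 \<le> f1 x - f2 x - (f1 xp - f2 xp)"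
proof -
  have "f1 xp + inner g2 (w - xp) \<le> f1 w" for w
    using xp[rule_format, of w] inner_diff_right[of g2 w xp] by linarith
  note s1xp = Fclass_shifted_subgradient[OF F1(1) this]
  note s1x = Fclass_shifted_subgradient_of_subdiff[OF F1(1) g1]
  note s2x = Fclass_shifted_subgradient_of_subdiff[OF F2(1) g2]
  note s2xp = Fclass_shifted_subgradient_of_subdiff[OF F2(1) g2p]
  from cert show ?thesis
  proof
    assume "dca_certificate \<mu>1 (inv_gap \<mu>1 (recip L1)) \<mu>2 (inv_gap \<mu>2 (recip L2)) \<sigma> \<sigma>p"
    thus ?thesis by (rule dca_descent_of_certificate[OF F1 F2 s1x s1xp s2x s2xp])
  next
    assume "dca_certificate \<mu>2 (inv_gap \<mu>2 (recip L2)) \<mu>1 (inv_gap \<mu>1 (recip L1)) \<sigma>p \<sigma>"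
    hence "\<sigma>p/2 * (norm (g2p - g2))^2 + \<sigma>/2 * (norm (g2 - g1))^2 \<le> f2 xp - f1 xp - (f2 x - f1 x)"
      by (rule dca_descent_of_certificate[OF F2 F1 s2xp s2x s1xp s1x])
    thus ?thesis by (simp add: norm_minus_commute)
  qed
qed

section \<open>Certificates on the domains D1, D3, D5, D7\<close>

lemma inv_gap_nonneg: "0 \<le> \<iota> \<Longrightarrow> \<mu> * \<iota> < 1 \<Longrightarrow> 0 \<le> inv_gap \<mu> \<iota>"
  by (simp add: inv_gap_def)

lemma psd2_first_block_zero: "0 \<le> \<kappa> \<Longrightarrow> psd2 (\<mu> * (1 + \<kappa> * \<mu>) - \<mu>) (\<kappa> * \<mu>) \<kappa>"
  by (simp add: psd2_def algebra_simps power2_eq_square)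

lemma psd2_first_block_D1:
  assumes \<iota>: "0 \<le> \<iota>1" "0 < \<iota>2" and \<mu>: "0 \<le> \<mu>" "\<mu> * \<iota>1 < 1"
  shows "psd2 (\<mu> * (1 + inv_gap \<mu> \<iota>1 * \<mu>) - \<mu> * (\<iota>2 - \<iota>1) / (1 - \<mu> * \<iota>1) / \<iota>2)
              (inv_gap \<mu> \<iota>1 * \<mu>) (inv_gap \<mu> \<iota>1 - \<iota>1 * (1 - \<mu> * \<iota>2) / (1 - \<mu> * \<iota>1))"
proof -
  define q where "q = 1 - \<mu> * \<iota>1"
  have q: "0 < q" using \<mu> by (simp add: q_def)
  have \<kappa>: "inv_gap \<mu> \<iota>1 = \<iota>1 / q" by (simp add: inv_gap_def q_def)
  have "\<mu> * (1 + inv_gap \<mu> \<iota>1 * \<mu>) - \<mu> * (\<iota>2 - \<iota>1) / (1 - \<mu> * \<iota>1) / \<iota>2 = \<mu> * \<iota>1 / (\<iota>2 * q)"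
    unfolding \<kappa> q_def[symmetric] using q \<iota> by (simp add: field_simps; simp add: q_def algebra_simps)
  moreover have "inv_gap \<mu> \<iota>1 - \<iota>1 * (1 - \<mu> * \<iota>2) / (1 - \<mu> * \<iota>1) = \<mu> * \<iota>1 * \<iota>2 / q"
    unfolding \<kappa> q_def[symmetric] using q by (simp add: field_simps; simp add: q_def algebra_simps)
  ultimately show ?thesis
    using q \<iota> \<mu> by (simp add: psd2_def \<kappa> power2_eq_square ac_simps)
qed

lemma psd2_first_block_D3:
  assumes \<iota>: "0 \<le> \<iota>" "\<mu> * \<iota> < 1" and \<mu>: "0 < \<mu>" and s: "s \<le> 0"
  shows "psd2 (\<mu> * (1 + inv_gap \<mu> \<iota> * \<mu>) - \<mu> / (1 - \<mu> * s)) (inv_gap \<mu> \<iota> * \<mu>)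
              (inv_gap \<mu> \<iota> - \<iota> * s / (s - \<iota>))"
proof (cases "\<iota> = 0")
  case True
  have "\<mu> / (1 - \<mu> * s) \<le> \<mu> / 1"
    using \<mu> s mult_nonneg_nonpos[of \<mu> s] by (intro divide_left_mono) auto
  thus ?thesis using True by (simp add: psd2_def inv_gap_def)
next
  case False
  define q r d where "q = 1 - \<mu> * \<iota>" and "r = 1 - \<mu> * s" and "d = \<iota> - s"
  have q: "0 < q" using \<iota> by (simp add: q_def)
  have r: "0 < r" using mult_nonneg_nonpos[of \<mu> s] \<mu> s by (simp add: r_def)
  have d: "0 < d" using False \<iota> s by (simp add: d_def)
  have \<kappa>: "inv_gap \<mu> \<iota> = \<iota> / q" by (simp add: inv_gap_def q_def)
  have c: "\<mu> * (1 + inv_gap \<mu> \<iota> * \<mu>) - \<mu> / (1 - \<mu> * s) = \<mu>^2 * d / (q * r)"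
    using q r unfolding \<kappa> r_def[symmetric]
    by (simp add: field_simps power2_eq_square; simp add: q_def r_def d_def algebra_simps)
  have "s - \<iota> = - d" by (simp add: d_def)
  hence p: "inv_gap \<mu> \<iota> - \<iota> * s / (s - \<iota>) = \<iota>^2 * r / (q * d)"
    using q d unfolding \<kappa>
    by (simp add: field_simps power2_eq_square; simp add: q_def r_def d_def algebra_simps)
  show ?thesis
    unfolding psd2_def c p
  proof (intro conjI)
    show "0 \<le> \<mu>^2 * d / (q * r)" "0 \<le> \<iota>^2 * r / (q * d)" using q r d by simp_all
    show "(inv_gap \<mu> \<iota> * \<mu>)^2 \<le> \<mu>^2 * d / (q * r) * (\<iota>^2 * r / (q * d))"
      using q r d by (simp add: \<kappa> power2_eq_square field_simps)
  qed
qed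

lemma psd2_second_block:
  assumes \<iota>: "0 < \<iota>" "\<mu> * \<iota> < 1" and \<beta>: "0 \<le> \<beta> + \<mu> * \<iota> * (1 + \<beta>)"
  shows "psd2 (\<beta>/\<iota> + (1 + 2*\<beta>) * \<mu> * (1 + inv_gap \<mu> \<iota> * \<mu>))
              (\<beta> + (1 + 2*\<beta>) * inv_gap \<mu> \<iota> * \<mu>)
              ((1 + 2*\<beta>) * inv_gap \<mu> \<iota> - (1 + \<beta>) * \<iota>)"
proof -
  define t where "t = \<beta> + (1 + 2*\<beta>) * inv_gap \<mu> \<iota> * \<mu>"
  have t: "t = (\<beta> + \<mu> * \<iota> * (1 + \<beta>)) / (1 - \<mu> * \<iota>)"
    using \<iota> by (simp add: t_def inv_gap_def field_simps)
  have "\<beta>/\<iota> + (1 + 2*\<beta>) * \<mu> * (1 + inv_gap \<mu> \<iota> * \<mu>) = t / \<iota>"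
    using \<iota> by (simp add: t inv_gap_def field_simps)
  moreover have "(1 + 2*\<beta>) * inv_gap \<mu> \<iota> - (1 + \<beta>) * \<iota> = t * \<iota>"
    using \<iota> by (simp add: t inv_gap_def field_simps)
  moreover have "0 \<le> t" using \<iota> \<beta> by (simp add: t)
  ultimately show ?thesis
    using \<iota> by (simp add: psd2_def t_def[symmetric] power2_eq_square)
qed

lemma dca_certificate_of_first_block:
  assumes "0 < \<iota>2" "\<mu>2 * \<iota>2 < 1" "0 \<le> \<beta>" "0 \<le> \<beta> + \<mu>2 * \<iota>2 * (1 + \<beta>)"
    and "psd2 (\<mu>1 * (1 + \<kappa>1 * \<mu>1) - \<beta>/\<iota>2) (\<kappa>1 * \<mu>1) (\<kappa>1 - \<sigma>)"
  shows "dca_certificate \<mu>1 \<kappa>1 \<mu>2 (inv_gap \<mu>2 \<iota>2) \<sigma> ((1 + \<beta>) * \<iota>2)"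
  unfolding dca_certificate_def using assms psd2_second_block[of \<iota>2 \<mu>2 \<beta>] by blast

lemma dca_certificate_D1_recip:
  assumes \<iota>: "0 \<le> \<iota>1" "\<iota>1 \<le> \<iota>2" "0 < \<iota>2" and \<mu>1: "0 \<le> \<mu>1" "\<mu>1 * \<iota>1 < 1"
    and \<mu>2: "\<mu>2 * \<iota>2 < 1"
    and cond: "0 \<le> \<mu>2 \<or> (0 < \<mu>1 + \<mu>2 \<and> \<mu>2 < 0 \<and> 1/\<mu>1 + 1/\<mu>2 + \<iota>2 \<le> \<iota>1 * (2 + 1/(\<iota>2 * \<mu>2)))"
  shows "dca_certificate \<mu>1 (inv_gap \<mu>1 \<iota>1) \<mu>2 (inv_gap \<mu>2 \<iota>2)
           (\<iota>1 * (1 - \<mu>1 * \<iota>2) / (1 - \<mu>1 * \<iota>1)) ((1 + \<mu>1 * (\<iota>2 - \<iota>1) / (1 - \<mu>1 * \<iota>1)) * \<iota>2)"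
proof (rule dca_certificate_of_first_block[OF \<iota>(3) \<mu>2])
  define \<beta> where "\<beta> = \<mu>1 * (\<iota>2 - \<iota>1) / (1 - \<mu>1 * \<iota>1)"
  have D: "0 < 1 - \<mu>1 * \<iota>1" using \<mu>1 by simp
  show "0 \<le> \<beta>" using \<iota> \<mu>1 D by (simp add: \<beta>_def)
  show "0 \<le> \<beta> + \<mu>2 * \<iota>2 * (1 + \<beta>)"
    using cond
  proof
    assume "0 \<le> \<mu>2"
    thus ?thesis using \<open>0 \<le> \<beta>\<close> \<iota> by simp
  next
    assume \<mu>: "0 < \<mu>1 + \<mu>2 \<and> \<mu>2 < 0 \<and> 1/\<mu>1 + 1/\<mu>2 + \<iota>2 \<le> \<iota>1 * (2 + 1/(\<iota>2 * \<mu>2))"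
    hence "0 < \<mu>1" "\<mu>2 < 0" by auto
    have "(1 - \<mu>1 * \<iota>1) * (\<beta> + \<mu>2 * \<iota>2 * (1 + \<beta>))
          = (\<mu>1 * \<mu>2 * \<iota>2) * ((1/\<mu>1 + 1/\<mu>2 + \<iota>2) - \<iota>1 * (2 + 1/(\<iota>2 * \<mu>2)))"
    proof -
      have "(1 - \<mu>1 * \<iota>1) * \<beta> = \<mu>1 * (\<iota>2 - \<iota>1)" using D by (simp add: \<beta>_def)
      moreover have "\<mu>1 * (1/\<mu>1) = 1" "\<mu>2 * (1/\<mu>2) = 1" "\<iota>2 * \<mu>2 * (1/(\<iota>2 * \<mu>2)) = 1"
        using \<iota> \<open>0 < \<mu>1\<close> \<open>\<mu>2 < 0\<close> by simp_all
      ultimately show ?thesis by algebra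
    qed
    moreover have "\<mu>1 * \<mu>2 * \<iota>2 \<le> 0"
      using \<iota> \<open>0 < \<mu>1\<close> \<open>\<mu>2 < 0\<close> by (simp add: mult_pos_neg mult_neg_pos less_imp_le)
    ultimately have "0 \<le> (1 - \<mu>1 * \<iota>1) * (\<beta> + \<mu>2 * \<iota>2 * (1 + \<beta>))"
      using \<mu> by (simp add: mult_nonpos_nonpos)
    thus ?thesis using D by (simp add: zero_le_mult_iff)
  qed
  show "psd2 (\<mu>1 * (1 + inv_gap \<mu>1 \<iota>1 * \<mu>1) - \<beta>/\<iota>2) (inv_gap \<mu>1 \<iota>1 * \<mu>1)
          (inv_gap \<mu>1 \<iota>1 - \<iota>1 * (1 - \<mu>1 * \<iota>2) / (1 - \<mu>1 * \<iota>1))"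
    unfolding \<beta>_def by (rule psd2_first_block_D1[OF \<iota>(1,3) \<mu>1])
qed

lemma dca_certificate_D7_recip:
  assumes \<iota>: "0 \<le> \<iota>1" "0 < \<iota>2" and \<mu>: "0 < \<mu>1" "\<mu>1 * \<iota>1 < 1" "\<mu>2 * \<iota>2 < 1"
    and cond: "0 \<le> \<mu>2 \<or> (\<mu>2 < 0 \<and> 1/\<mu>1 + 1/\<mu>2 + \<iota>2 \<le> 0)"
  shows "dca_certificate \<mu>1 (inv_gap \<mu>1 \<iota>1) \<mu>2 (inv_gap \<mu>2 \<iota>2) 0 ((1 + \<mu>1 * \<iota>2) * \<iota>2)"
proof (rule dca_certificate_of_first_block[OF \<iota>(2) \<mu>(3)])
  show "0 \<le> \<mu>1 * \<iota>2" using \<iota> \<mu> by simp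
  show "0 \<le> \<mu>1 * \<iota>2 + \<mu>2 * \<iota>2 * (1 + \<mu>1 * \<iota>2)"
    using cond
  proof
    assume "0 \<le> \<mu>2"
    thus ?thesis using \<iota> \<mu> by simp
  next
    assume \<mu>2: "\<mu>2 < 0 \<and> 1/\<mu>1 + 1/\<mu>2 + \<iota>2 \<le> 0"
    have "\<mu>1 * \<iota>2 + \<mu>2 * \<iota>2 * (1 + \<mu>1 * \<iota>2) = (\<mu>1 * \<mu>2 * \<iota>2) * (1/\<mu>1 + 1/\<mu>2 + \<iota>2)"
      using \<mu> \<mu>2 by (simp add: field_simps)
    moreover have "\<mu>1 * \<mu>2 * \<iota>2 \<le> 0"
      using \<iota> \<mu> \<mu>2 by (simp add: mult_pos_neg mult_neg_pos less_imp_le)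
    ultimately show ?thesis using \<mu>2 by (simp add: mult_nonpos_nonpos)
  qed
  show "psd2 (\<mu>1 * (1 + inv_gap \<mu>1 \<iota>1 * \<mu>1) - \<mu>1 * \<iota>2 / \<iota>2) (inv_gap \<mu>1 \<iota>1 * \<mu>1)
          (inv_gap \<mu>1 \<iota>1 - 0)"
    using psd2_first_block_zero[OF inv_gap_nonneg[OF \<iota>(1) \<mu>(2)]] \<iota> by simp
qed

lemma dca_certificate_D5_recip:
  assumes \<iota>: "0 \<le> \<iota>1" "0 \<le> \<iota>2" and \<mu>1: "\<mu>1 * \<iota>1 < 1" and \<mu>: "0 < \<mu>1 + \<mu>2" "\<mu>2 < 0"
    and S: "0 \<le> 1/\<mu>1 + 1/\<mu>2 + \<iota>2"
  shows "dca_certificate \<mu>1 (inv_gap \<mu>1 \<iota>1) \<mu>2 (inv_gap \<mu>2 \<iota>2) 0 ((\<mu>1 + \<mu>2) / \<mu>2^2)"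
proof -
  define \<beta> where "\<beta> = - (\<mu>1 + \<mu>2) / \<mu>2"
  define c where "c = \<mu>1 + (1 + 2*\<beta>) * \<mu>2 * (1 + inv_gap \<mu>2 \<iota>2 * \<mu>2)"
  define m where "m = 1 - \<mu>2 * \<iota>2"
  have m: "0 < m" using mult_nonpos_nonneg[of \<mu>2 \<iota>2] \<iota> \<mu> by (simp add: m_def)
  have "0 < \<mu>1" using \<mu> by simp
  have \<kappa>: "inv_gap \<mu>2 \<iota>2 = \<iota>2 / m" by (simp add: inv_gap_def m_def)
  have "c = - (\<mu>1 * \<mu>2) * (1/\<mu>1 + 1/\<mu>2 + \<iota>2) / m"
    using m \<mu> \<open>0 < \<mu>1\<close> unfolding c_def \<beta>_def \<kappa>
    by (simp add: field_simps; simp add: m_def algebra_simps)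
  moreover have "\<mu>1 * \<mu>2 * (1/\<mu>1 + 1/\<mu>2 + \<iota>2) \<le> 0"
    using mult_pos_neg[of \<mu>1 \<mu>2] S \<mu> \<open>0 < \<mu>1\<close> by (simp add: mult_nonpos_nonneg)
  ultimately have c: "0 \<le> c" using m by (simp add: divide_nonpos_pos)
  have "\<beta> + (1 + 2*\<beta>) * inv_gap \<mu>2 \<iota>2 * \<mu>2 = c / \<mu>2"
    using m \<mu> unfolding c_def \<beta>_def \<kappa>
    by (simp add: field_simps; simp add: m_def algebra_simps)
  moreover have "(1 + 2*\<beta>) * inv_gap \<mu>2 \<iota>2 - (\<mu>1 + \<mu>2) / \<mu>2^2 = c / \<mu>2^2"
    using m \<mu> unfolding c_def \<beta>_def \<kappa>
    by (simp add: field_simps power2_eq_square; simp add: m_def algebra_simps)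
  ultimately have "psd2 (\<mu>1 + (1 + 2*\<beta>) * \<mu>2 * (1 + inv_gap \<mu>2 \<iota>2 * \<mu>2))
                      (\<beta> + (1 + 2*\<beta>) * inv_gap \<mu>2 \<iota>2 * \<mu>2)
                      ((1 + 2*\<beta>) * inv_gap \<mu>2 \<iota>2 - (\<mu>1 + \<mu>2) / \<mu>2^2)"
    using c \<mu> by (simp add: psd2_def c_def[symmetric] power2_eq_square)
  moreover have "0 \<le> \<beta>" using \<mu> by (simp add: \<beta>_def divide_nonpos_neg)
  ultimately show ?thesis
    unfolding dca_certificate_def diff_zero
    using psd2_first_block_zero[OF inv_gap_nonneg[OF \<iota>(1) \<mu>1]] by blast
qed

lemma dca_certificate_D3_recip:
  assumes \<iota>: "0 \<le> \<iota>1" "0 \<le> \<iota>2" and \<mu>1: "\<mu>1 * \<iota>1 < 1" "\<mu>1 * \<iota>2 < 1"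
    and \<mu>: "0 < \<mu>1 + \<mu>2" "\<mu>2 < 0" and S: "1/\<mu>1 + 1/\<mu>2 + \<iota>2 \<le> 0"
  shows "dca_certificate \<mu>1 (inv_gap \<mu>1 \<iota>1) \<mu>2 (inv_gap \<mu>2 \<iota>2)
           (\<iota>1 * (1/\<mu>1 + 1/\<mu>2 + \<iota>2) / ((1/\<mu>1 + 1/\<mu>2 + \<iota>2) - \<iota>1)) (\<iota>2 / (1 + \<mu>2 * \<iota>2))"
proof -
  define s p m where "s = 1/\<mu>1 + 1/\<mu>2 + \<iota>2" and "p = 1 + \<mu>2 * \<iota>2" and "m = 1 - \<mu>2 * \<iota>2"
  define \<beta> where "\<beta> = - \<mu>2 * \<iota>2 / p"
  have "0 < \<mu>1" using \<mu> by simp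
  have "- \<mu>2 * \<iota>2 \<le> \<mu>1 * \<iota>2" using mult_right_mono[of "- \<mu>2" \<mu>1 \<iota>2] \<mu> \<iota> by simp
  hence p: "0 < p" using \<mu>1 by (simp add: p_def)
  have m: "0 < m" using mult_nonpos_nonneg[of \<mu>2 \<iota>2] \<iota> \<mu> by (simp add: m_def)
  have \<kappa>2: "inv_gap \<mu>2 \<iota>2 = \<iota>2 / m" by (simp add: inv_gap_def m_def)
  have \<beta>2: "1 + 2*\<beta> = m / p"
    using p by (simp add: \<beta>_def field_simps; simp add: p_def m_def)
  have "1 - \<mu>1 * s = - \<mu>1 * p / \<mu>2"
    using \<mu> \<open>0 < \<mu>1\<close> by (simp add: s_def p_def field_simps)
  hence e: "\<mu>1 / (1 - \<mu>1 * s) = - \<mu>2 / p"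
    using p \<mu> \<open>0 < \<mu>1\<close> by simp
  have "0 \<le> \<beta>"
    using divide_nonpos_pos[OF mult_nonpos_nonneg[of \<mu>2 \<iota>2] p] \<mu> \<iota> by (simp add: \<beta>_def)
  have "\<mu>1 / (1 - \<mu>1 * s) + (1 + 2*\<beta>) * \<mu>2 * (1 + inv_gap \<mu>2 \<iota>2 * \<mu>2) = 0"
    using p m unfolding e \<beta>2 \<kappa>2 by (simp add: field_simps; simp add: p_def m_def algebra_simps)
  moreover have "\<beta> + (1 + 2*\<beta>) * inv_gap \<mu>2 \<iota>2 * \<mu>2 = 0"
    using p m unfolding \<beta>2 \<kappa>2 by (simp add: \<beta>_def field_simps)
  moreover have "(1 + 2*\<beta>) * inv_gap \<mu>2 \<iota>2 - \<iota>2 / p = 0"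
    using p m unfolding \<beta>2 \<kappa>2 by simp
  ultimately have "psd2 (\<mu>1 / (1 - \<mu>1 * s) + (1 + 2*\<beta>) * \<mu>2 * (1 + inv_gap \<mu>2 \<iota>2 * \<mu>2))
      (\<beta> + (1 + 2*\<beta>) * inv_gap \<mu>2 \<iota>2 * \<mu>2) ((1 + 2*\<beta>) * inv_gap \<mu>2 \<iota>2 - \<iota>2 / p)"
    by (simp add: psd2_def)
  moreover note psd2_first_block_D3[OF \<iota>(1) \<mu>1(1) \<open>0 < \<mu>1\<close> S[folded s_def]]
  ultimately show ?thesis
    unfolding dca_certificate_def s_def[symmetric] p_def[symmetric]
    using \<open>0 \<le> \<beta>\<close> by blast
qed

section \<open>Translation to extended-real constants\<close>

lemma recip_nonneg: "0 < L \<Longrightarrow> 0 \<le> recip L"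
  by (cases L) auto

lemma inverse_ereal_recip: "0 < L \<Longrightarrow> inverse L = ereal (recip L)"
  by (cases L) (auto simp: inverse_eq_divide)

lemma ereal_less_iff_recip: "0 < L \<Longrightarrow> ereal \<mu> < L \<longleftrightarrow> \<mu> * recip L < 1"
  by (cases L) (auto simp: field_simps)

lemma less_ereal_iff_recip: "0 < L \<Longrightarrow> L < ereal \<mu> \<longleftrightarrow> 1 < \<mu> * recip L"
  by (cases L) (auto simp: field_simps)

lemma ereal_le_iff_recip: "0 < L1 \<Longrightarrow> 0 < L2 \<Longrightarrow> L2 \<le> L1 \<longleftrightarrow> recip L1 \<le> recip L2"
  by (cases L1; cases L2) (auto simp: frac_le_eq field_simps)

lemma inverse_ereal_sum_recip:
  "\<mu>1 \<noteq> 0 \<Longrightarrow> \<mu>2 \<noteq> 0 \<Longrightarrow> 0 < L \<Longrightarrow>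
   inverse (ereal \<mu>1) + inverse (ereal \<mu>2) + inverse L = ereal (1/\<mu>1 + 1/\<mu>2 + recip L)"
  by (simp add: inverse_ereal_recip inverse_eq_divide)

lemma inverse_ereal_sum_le_iff_recip:
  assumes L: "0 < L1" "L2 = ereal l2" "0 < l2" and \<mu>: "\<mu>1 \<noteq> 0" "\<mu>2 \<noteq> 0"
  shows "inverse (ereal \<mu>1) + inverse (ereal \<mu>2) + inverse L2 \<le> inverse L1 * (2 + L2 / ereal \<mu>2)
         \<longleftrightarrow> 1/\<mu>1 + 1/\<mu>2 + recip L2 \<le> recip L1 * (2 + 1/(recip L2 * \<mu>2))"
proof -
  have "0 < L2" using L by simp
  have "inverse L1 * (2 + L2 / ereal \<mu>2) = ereal (recip L1 * (2 + 1/(recip L2 * \<mu>2)))"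
    using L \<mu> by (simp add: inverse_ereal_recip divide_ereal_def inverse_eq_divide)
  thus ?thesis unfolding inverse_ereal_sum_recip[OF \<mu> \<open>0 < L2\<close>] by simp
qed

lemma lim_ext_eq_recip:
  assumes L: "0 < L1" "0 < L2" "\<not> (L1 = \<infinity> \<and> L2 = \<infinity>)"
    and \<phi>: "\<And>a b. 0 < a \<Longrightarrow> 0 < b \<Longrightarrow> \<phi> a b = \<psi> (1/a) (1/b)"
    and cont1: "L1 = \<infinity> \<Longrightarrow> isCont (\<lambda>i. \<psi> i (recip L2)) 0"
    and cont2: "L2 = \<infinity> \<Longrightarrow> isCont (\<psi> (recip L1)) 0"
  shows "lim_ext \<phi> L1 L2 = \<psi> (recip L1) (recip L2)"
proof -
  have inv: "((\<lambda>t::real. 1/t) \<longlongrightarrow> 0) at_top"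
    using tendsto_inverse_0_at_top[OF filterlim_ident] by (simp add: inverse_eq_divide)
  consider (fin) l1 l2 where "L1 = ereal l1" "L2 = ereal l2" "0 < l1" "0 < l2"
    | (inf1) l2 where "L1 = \<infinity>" "L2 = ereal l2" "0 < l2"
    | (inf2) l1 where "L1 = ereal l1" "L2 = \<infinity>" "0 < l1"
    using L by (cases L1; cases L2) auto
  thus ?thesis
  proof cases
    case fin
    thus ?thesis by (simp add: lim_ext_def \<phi>)
  next
    case inf1
    have "((\<lambda>t. \<psi> (1/t) (1/l2)) \<longlongrightarrow> \<psi> 0 (1/l2)) at_top"
      using isCont_tendsto_compose[OF cont1 inv] inf1 by simp
    moreover have "\<forall>\<^sub>F t in at_top. \<psi> (1/t) (1/l2) = \<phi> t l2"
      using eventually_gt_at_top[of 0] by eventually_elim (simp add: \<phi> inf1)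
    ultimately have "((\<lambda>t. \<phi> t l2) \<longlongrightarrow> \<psi> 0 (1/l2)) at_top"
      by (rule Lim_transform_eventually)
    thus ?thesis using inf1 by (simp add: lim_ext_def tendsto_Lim)
  next
    case inf2
    have "((\<lambda>t. \<psi> (1/l1) (1/t)) \<longlongrightarrow> \<psi> (1/l1) 0) at_top"
      using isCont_tendsto_compose[OF cont2 inv] inf2 by simp
    moreover have "\<forall>\<^sub>F t in at_top. \<psi> (1/l1) (1/t) = \<phi> l1 t"
      using eventually_gt_at_top[of 0] by eventually_elim (simp add: \<phi> inf2)
    ultimately have "((\<lambda>t. \<phi> l1 t) \<longlongrightarrow> \<psi> (1/l1) 0) at_top"
      by (rule Lim_transform_eventually)
    thus ?thesis using inf2 by (simp add: lim_ext_def tendsto_Lim)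
  qed
qed

lemma lim_ext_swap: "\<not> (L1 = \<infinity> \<and> L2 = \<infinity>) \<Longrightarrow> lim_ext \<phi> L2 L1 = lim_ext (\<lambda>a b. \<phi> b a) L1 L2"
  unfolding lim_ext_def by auto

lemma dca_certificate_D1:
  assumes L: "0 < L1" "0 < L2" "\<not> (L1 = \<infinity> \<and> L2 = \<infinity>)" "L2 \<le> L1"
    and \<mu>L: "ereal \<mu>1 < L1" "ereal \<mu>2 < L2" and \<mu>1: "0 \<le> \<mu>1"
    and cond: "0 \<le> \<mu>2 \<or> (\<mu>1 > - \<mu>2 \<and> - \<mu>2 > 0 \<and>
       inverse (ereal \<mu>1) + inverse (ereal \<mu>2) + inverse L2 \<le> inverse L1 * (2 + L2 / ereal \<mu>2))"
  shows "dca_certificate \<mu>1 (inv_gap \<mu>1 (recip L1)) \<mu>2 (inv_gap \<mu>2 (recip L2))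
           (lim_ext (\<lambda>l1 l2. (l2 - \<mu>1) / (l2 * (l1 - \<mu>1))) L1 L2)
           (lim_ext (\<lambda>l1 l2. (1 / l2) * (1 + \<mu>1 * (l1 - l2) / (l2 * (l1 - \<mu>1)))) L1 L2)"
proof -
  obtain l2 where l2: "L2 = ereal l2" "0 < l2" using L by (cases L2) auto
  have \<iota>: "0 \<le> recip L1" "recip L1 \<le> recip L2" "0 < recip L2"
    using L ereal_le_iff_recip[of L1 L2] l2 by (simp_all add: recip_nonneg)
  have \<mu>\<iota>: "\<mu>1 * recip L1 < 1" "\<mu>2 * recip L2 < 1"
    using \<mu>L L by (simp_all add: ereal_less_iff_recip)
  have "0 \<le> \<mu>2 \<or> (0 < \<mu>1 + \<mu>2 \<and> \<mu>2 < 0 \<and>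
          1/\<mu>1 + 1/\<mu>2 + recip L2 \<le> recip L1 * (2 + 1/(recip L2 * \<mu>2)))"
    using cond
  proof (rule disj_forward)
    assume c: "\<mu>1 > - \<mu>2 \<and> - \<mu>2 > 0 \<and>
       inverse (ereal \<mu>1) + inverse (ereal \<mu>2) + inverse L2 \<le> inverse L1 * (2 + L2 / ereal \<mu>2)"
    hence "\<mu>1 \<noteq> 0" "\<mu>2 \<noteq> 0" "0 < \<mu>1 + \<mu>2" "\<mu>2 < 0" by auto
    thus "0 < \<mu>1 + \<mu>2 \<and> \<mu>2 < 0 \<and> 1/\<mu>1 + 1/\<mu>2 + recip L2 \<le> recip L1 * (2 + 1/(recip L2 * \<mu>2))"
      using c inverse_ereal_sum_le_iff_recip[OF L(1) l2] by blast
  qed simp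
  note cert = dca_certificate_D1_recip[OF \<iota> \<mu>1 \<mu>\<iota> this]
  have "lim_ext (\<lambda>l1 l2. (l2 - \<mu>1) / (l2 * (l1 - \<mu>1))) L1 L2
        = recip L1 * (1 - \<mu>1 * recip L2) / (1 - \<mu>1 * recip L1)"
  proof (rule lim_ext_eq_recip[OF L(1-3)])
    show "(b - \<mu>1) / (b * (a - \<mu>1)) = 1/a * (1 - \<mu>1 * (1/b)) / (1 - \<mu>1 * (1/a))"
      if "0 < a" "0 < b" for a b
      using that by (cases "a = \<mu>1") (simp_all add: field_simps)
    show "isCont (\<lambda>i. i * (1 - \<mu>1 * recip L2) / (1 - \<mu>1 * i)) 0"
      by (intro continuous_intros) simp
  qed (use l2 in simp)
  moreover have "lim_ext (\<lambda>l1 l2. (1 / l2) * (1 + \<mu>1 * (l1 - l2) / (l2 * (l1 - \<mu>1)))) L1 L2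
        = (1 + \<mu>1 * (recip L2 - recip L1) / (1 - \<mu>1 * recip L1)) * recip L2"
  proof (rule lim_ext_eq_recip[OF L(1-3)])
    show "1 / b * (1 + \<mu>1 * (a - b) / (b * (a - \<mu>1)))
          = (1 + \<mu>1 * (1/b - 1/a) / (1 - \<mu>1 * (1/a))) * (1/b)"
      if "0 < a" "0 < b" for a b
      using that by (cases "a = \<mu>1") (simp_all add: field_simps)
    show "isCont (\<lambda>i. (1 + \<mu>1 * (recip L2 - i) / (1 - \<mu>1 * i)) * recip L2) 0"
      by (intro continuous_intros) simp
  qed (use l2 in simp)
  ultimately show ?thesis using cert by simp
qed

lemma dca_certificate_D3:
  assumes L: "0 < L1" "0 < L2" "\<not> (L1 = \<infinity> \<and> L2 = \<infinity>)"
    and \<mu>L: "ereal \<mu>1 < L1" "ereal \<mu>1 < L2" and \<mu>: "\<mu>1 > - \<mu>2" "- \<mu>2 > 0"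
    and S: "inverse (ereal \<mu>1) + inverse (ereal \<mu>2) + inverse L2 \<le> 0"
  shows "dca_certificate \<mu>1 (inv_gap \<mu>1 (recip L1)) \<mu>2 (inv_gap \<mu>2 (recip L2))
           (lim_ext (\<lambda>l1 l2. ((1 / l1) * (1/\<mu>1 + 1/\<mu>2 + 1/l2)) / ((1/\<mu>1 + 1/\<mu>2 + 1/l2) - 1 / l1)) L1 L2)
           (lim_ext (\<lambda>l1 l2. 1 / (l2 + \<mu>2)) L1 L2)"
proof -
  have \<mu>': "\<mu>1 \<noteq> 0" "\<mu>2 \<noteq> 0" "0 < \<mu>1 + \<mu>2" "\<mu>2 < 0" using \<mu> by auto
  have \<iota>: "0 \<le> recip L1" "0 \<le> recip L2" using L by (simp_all add: recip_nonneg)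
  have \<mu>\<iota>: "\<mu>1 * recip L1 < 1" "\<mu>1 * recip L2 < 1" using \<mu>L L by (simp_all add: ereal_less_iff_recip)
  have S': "1/\<mu>1 + 1/\<mu>2 + recip L2 \<le> 0"
    using S unfolding inverse_ereal_sum_recip[OF \<mu>'(1,2) L(2)] by simp
  have "1/\<mu>1 < 1/(- \<mu>2)" using \<mu> by (intro frac_less2) auto
  hence neg: "1/\<mu>1 + 1/\<mu>2 < 0" by simp
  have "lim_ext (\<lambda>l1 l2. ((1 / l1) * (1/\<mu>1 + 1/\<mu>2 + 1/l2)) / ((1/\<mu>1 + 1/\<mu>2 + 1/l2) - 1 / l1)) L1 L2
        = recip L1 * (1/\<mu>1 + 1/\<mu>2 + recip L2) / ((1/\<mu>1 + 1/\<mu>2 + recip L2) - recip L1)"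
  proof (rule lim_ext_eq_recip[OF L, where \<psi> = "\<lambda>i j. i * (1/\<mu>1 + 1/\<mu>2 + j) / ((1/\<mu>1 + 1/\<mu>2 + j) - i)"])
    show "isCont (\<lambda>i. i * (1/\<mu>1 + 1/\<mu>2 + recip L2) / ((1/\<mu>1 + 1/\<mu>2 + recip L2) - i)) 0"
      by (cases "1/\<mu>1 + 1/\<mu>2 + recip L2 = 0") (auto intro!: continuous_intros)
    show "isCont (\<lambda>j. recip L1 * (1/\<mu>1 + 1/\<mu>2 + j) / ((1/\<mu>1 + 1/\<mu>2 + j) - recip L1)) 0"
      using neg \<iota> by (intro continuous_intros) auto
  qed simp
  moreover have "lim_ext (\<lambda>l1 l2. 1 / (l2 + \<mu>2)) L1 L2 = recip L2 / (1 + \<mu>2 * recip L2)"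
  proof (rule lim_ext_eq_recip[OF L, where \<psi> = "\<lambda>i j. j / (1 + \<mu>2 * j)"])
    show "1 / (b + \<mu>2) = 1/b / (1 + \<mu>2 * (1/b))" if "0 < b" for b
      using that by (cases "b + \<mu>2 = 0") (simp_all add: field_simps)
    show "isCont (\<lambda>j. j / (1 + \<mu>2 * j)) 0"
      by (intro continuous_intros) simp
  qed simp
  ultimately show ?thesis using dca_certificate_D3_recip[OF \<iota> \<mu>\<iota> \<mu>'(3,4) S'] by simp
qed

lemma dca_certificate_D5:
  assumes L: "0 < L1" "0 < L2" and \<mu>L: "ereal \<mu>1 < L1" and \<mu>: "\<mu>1 > - \<mu>2" "- \<mu>2 > 0"
    and S: "0 < inverse (ereal \<mu>1) + inverse (ereal \<mu>2) + inverse L2"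
  shows "dca_certificate \<mu>1 (inv_gap \<mu>1 (recip L1)) \<mu>2 (inv_gap \<mu>2 (recip L2)) 0 ((\<mu>1 + \<mu>2) / \<mu>2^2)"
proof (rule dca_certificate_D5_recip)
  have "\<mu>1 \<noteq> 0" "\<mu>2 \<noteq> 0" using \<mu> by auto
  with S show "0 \<le> 1/\<mu>1 + 1/\<mu>2 + recip L2"
    unfolding inverse_ereal_sum_recip[OF \<open>\<mu>1 \<noteq> 0\<close> \<open>\<mu>2 \<noteq> 0\<close> L(2)] by simp
qed (use L \<mu>L \<mu> in \<open>simp_all add: recip_nonneg ereal_less_iff_recip\<close>)

lemma dca_certificate_D7:
  assumes L: "0 < L1" "0 < L2" and \<mu>L: "ereal \<mu>1 < L1" "ereal \<mu>2 < L2" "L2 < ereal \<mu>1"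
    and cond: "0 \<le> \<mu>2 \<or> (\<mu>2 < 0 \<and> inverse (ereal \<mu>1) + inverse (ereal \<mu>2) + inverse L2 \<le> 0)"
  shows "dca_certificate \<mu>1 (inv_gap \<mu>1 (recip L1)) \<mu>2 (inv_gap \<mu>2 (recip L2)) 0
           (lim_ext (\<lambda>l1 l2. (l2 + \<mu>1) / l2^2) L1 L2)"
proof -
  have \<iota>: "0 \<le> recip L1" "0 \<le> recip L2" using L by (simp_all add: recip_nonneg)
  have "1 < \<mu>1 * recip L2" using \<mu>L L by (simp add: less_ereal_iff_recip)
  hence "0 < \<mu>1 * recip L2" by simp
  hence \<mu>1: "0 < \<mu>1" and \<iota>2: "0 < recip L2"
    using \<iota> by (auto simp: zero_less_mult_iff)
  have \<mu>\<iota>: "\<mu>1 * recip L1 < 1" "\<mu>2 * recip L2 < 1" using \<mu>L L by (simp_all add: ereal_less_iff_recip)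
  have cond': "0 \<le> \<mu>2 \<or> (\<mu>2 < 0 \<and> 1/\<mu>1 + 1/\<mu>2 + recip L2 \<le> 0)"
    using cond inverse_ereal_sum_recip[of \<mu>1 \<mu>2 L2] \<mu>1 L by auto
  have "lim_ext (\<lambda>l1 l2. (l2 + \<mu>1) / l2^2) L1 L2 = (1 + \<mu>1 * recip L2) * recip L2"
  proof (rule lim_ext_eq_recip[where \<psi> = "\<lambda>i j. (1 + \<mu>1 * j) * j"])
    show "\<not> (L1 = \<infinity> \<and> L2 = \<infinity>)" using \<iota>2 by auto
    show "(b + \<mu>1) / b^2 = (1 + \<mu>1 * (1/b)) * (1/b)" if "0 < b" for b
      using that by (simp add: field_simps power2_eq_square)
  qed (use L in simp_all)
  thus ?thesis using dca_certificate_D7_recip[OF \<iota>(1) \<iota>2 \<mu>1 \<mu>\<iota> cond'] by simp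
qed

theorem mainTheorem3:
  fixes f1 f2 :: "'a::euclidean_space \<Rightarrow> real"
    and L1 L2 :: ereal and \<mu>1 \<mu>2 :: real
    and x xp g1 g2 g2p :: 'a
  assumes L1pos: "0 < L1" and L2pos: "0 < L2"
    and notboth: "\<not> (L1 = \<infinity> \<and> L2 = \<infinity>)"
    and mu1L1: "ereal \<mu>1 < L1" and mu2L2: "ereal \<mu>2 < L2"
    and musum: "\<mu>1 + \<mu>2 > 0 \<or> (\<mu>1 = 0 \<and> \<mu>2 = 0)"
    and f1F: "Fclass \<mu>1 L1 f1" and f2F: "Fclass \<mu>2 L2 f2"
    and bdd: "bdd_below (range (\<lambda>z. f1 z - f2 z))"
    and g2: "g2 \<in> subdiff \<mu>2 f2 x"
    and xp: "\<forall>w. f1 xp - inner g2 xp \<le> f1 w - inner g2 w"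
    and g1: "g1 \<in> subdiff \<mu>1 f1 x"
    and g2p: "g2p \<in> subdiff \<mu>2 f2 xp"
  defines "F \<equiv> (\<lambda>z. f1 z - f2 z)"
    and "S1 \<equiv> inverse (ereal \<mu>1) + inverse (ereal \<mu>2) + inverse L2"
    and "S2 \<equiv> inverse (ereal \<mu>1) + inverse (ereal \<mu>2) + inverse L1"
    and "T1 \<equiv> inverse L1 * (2 + L2 / ereal \<mu>2)"
    and "T2 \<equiv> inverse L2 * (2 + L1 / ereal \<mu>1)"
    and "bound \<equiv> (\<lambda>\<sigma> \<sigma>p. \<sigma> / 2 * (norm (g1 - g2))^2 + \<sigma>p / 2 * (norm (g2 - g2p))^2)"
  shows
   "(L2 \<le> L1 \<and> ereal \<mu>1 < L2 \<and> 0 \<le> \<mu>1 \<and>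
       (0 \<le> \<mu>2 \<or> (\<mu>1 > - \<mu>2 \<and> - \<mu>2 > 0 \<and> S1 \<le> T1))
     \<longrightarrow> F x - F xp \<ge> bound
           (lim_ext (\<lambda>l1 l2. (l2 - \<mu>1) / (l2 * (l1 - \<mu>1))) L1 L2)
           (lim_ext (\<lambda>l1 l2. (1 / l2) * (1 + \<mu>1 * (l1 - l2) / (l2 * (l1 - \<mu>1)))) L1 L2))
  \<and> (L1 \<le> L2 \<and> ereal \<mu>2 < L1 \<and> 0 \<le> \<mu>2 \<and>
       (0 \<le> \<mu>1 \<or> (\<mu>2 > - \<mu>1 \<and> - \<mu>1 > 0 \<and> S2 \<le> T2))
     \<longrightarrow> F x - F xp \<ge> bound
           (lim_ext (\<lambda>l1 l2. (1 / l1) * (1 + \<mu>2 * (l2 - l1) / (l1 * (l2 - \<mu>2)))) L1 L2)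
           (lim_ext (\<lambda>l1 l2. (l1 - \<mu>2) / (l1 * (l2 - \<mu>2))) L1 L2))
  \<and> (\<mu>1 > - \<mu>2 \<and> - \<mu>2 > 0 \<and> ereal \<mu>1 < L2 \<and> ereal \<mu>2 < L1 \<and> T1 \<le> S1 \<and> S1 \<le> 0
     \<longrightarrow> F x - F xp \<ge> bound
           (lim_ext (\<lambda>l1 l2. ((1 / l1) * (1/\<mu>1 + 1/\<mu>2 + 1/l2)) / ((1/\<mu>1 + 1/\<mu>2 + 1/l2) - 1 / l1)) L1 L2)
           (lim_ext (\<lambda>l1 l2. 1 / (l2 + \<mu>2)) L1 L2))
  \<and> (\<mu>2 > - \<mu>1 \<and> - \<mu>1 > 0 \<and> ereal \<mu>1 < L2 \<and> ereal \<mu>2 < L1 \<and> T2 \<le> S2 \<and> S2 \<le> 0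
     \<longrightarrow> F x - F xp \<ge> bound
           (lim_ext (\<lambda>l1 l2. 1 / (l1 + \<mu>1)) L1 L2)
           (lim_ext (\<lambda>l1 l2. ((1 / l2) * (1/\<mu>1 + 1/\<mu>2 + 1/l1)) / ((1/\<mu>1 + 1/\<mu>2 + 1/l1) - 1 / l2)) L1 L2))
  \<and> (\<mu>1 > - \<mu>2 \<and> - \<mu>2 > 0 \<and> ereal \<mu>2 < L1 \<and> max T1 0 < S1
     \<longrightarrow> F x - F xp \<ge> bound 0 ((\<mu>1 + \<mu>2) / \<mu>2^2))
  \<and> (\<mu>2 > - \<mu>1 \<and> - \<mu>1 > 0 \<and> ereal \<mu>1 < L2 \<and> max T2 0 < S2
     \<longrightarrow> F x - F xp \<ge> bound ((\<mu>1 + \<mu>2) / \<mu>1^2) 0)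
  \<and> (ereal \<mu>1 < L1 \<and> L2 < ereal \<mu>1 \<and> 0 < L2 \<and> (0 \<le> \<mu>2 \<or> (\<mu>2 < 0 \<and> S1 \<le> 0))
     \<longrightarrow> F x - F xp \<ge> bound 0 (lim_ext (\<lambda>l1 l2. (l2 + \<mu>1) / l2^2) L1 L2))
  \<and> (ereal \<mu>2 < L2 \<and> L1 < ereal \<mu>2 \<and> 0 < L1 \<and> (0 \<le> \<mu>1 \<or> (\<mu>1 < 0 \<and> S2 \<le> 0))
     \<longrightarrow> F x - F xp \<ge> bound (lim_ext (\<lambda>l1 l2. (l1 + \<mu>2) / l1^2) L1 L2) 0)"
proof -
  note descent = dca_descent[OF f1F mu1L1 L1pos f2F mu2L2 L2pos g2 xp g1 g2p]
  have notboth': "\<not> (L2 = \<infinity> \<and> L1 = \<infinity>)" using notboth by blast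
  have S2: "S2 = inverse (ereal \<mu>2) + inverse (ereal \<mu>1) + inverse L1"
    by (simp add: S2_def add_ac)
  note swap = lim_ext_swap[OF notboth]
  \<comment> \<open>The even domains are handled by the odd-domain lemmas with f1 and f2 exchanged.\<close>
  show ?thesis
    unfolding F_def bound_def S2 S1_def T1_def T2_def
    apply (intro conjI impI; rule descent)
    subgoal by (rule disjI1, rule dca_certificate_D1) (use L1pos L2pos notboth mu1L1 mu2L2 in auto)
    subgoal by (rule disjI2, subst (1 2) swap[symmetric], rule dca_certificate_D1)
        (use L1pos L2pos notboth' mu1L1 mu2L2 in auto)
    subgoal by (rule disjI1, rule dca_certificate_D3) (use L1pos L2pos notboth mu1L1 mu2L2 in auto)
    subgoal by (rule disjI2, subst (1 2) swap[symmetric], simp only: add.commute[of "1/\<mu>1" "1/\<mu>2"],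
        rule dca_certificate_D3) (use L1pos L2pos notboth' mu1L1 mu2L2 in auto)
    subgoal by (rule disjI1, rule dca_certificate_D5) (use L1pos L2pos mu1L1 in auto)
    subgoal by (rule disjI2, simp only: add.commute[of \<mu>1 \<mu>2], rule dca_certificate_D5) (use L1pos L2pos mu2L2 in auto)
    subgoal by (rule disjI1, rule dca_certificate_D7) (use L1pos L2pos mu1L1 mu2L2 in auto)
    subgoal by (rule disjI2, subst swap[symmetric], rule dca_certificate_D7) (use L1pos L2pos mu1L1 mu2L2 in auto)
    done
qed

end
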